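(* For every prime power $q$ and integer $n\geq 2$, the design of points and hyperplanes of $\mathrm{PG}(n,q)$ is additive under $\mathrm{EA}(q^{n+1})$. In particular, the desarguesian projective plane of order $q$ is additive under $\mathrm{EA}(q^3)$.
   Context: $\mathrm{PG}(n,q)$ is the $n$-dimensional projective geometry over the finite field $\mathbb{F}_q$; its point-hyperplane design has the points of $\mathrm{PG}(n,q)$ as points and the hyperplanes (as sets of points) as blocks. $\mathrm{EA}(q^{n+1})$ denotes the elementary abelian group of order $q^{n+1}$. A design $(V,\mathscr B)$ is additive under an abelian group $G$ if there is an injective map $f:V\to G$ such that $\sum_{x\in B}f(x)=0$ for every block $B\in\mathscr B$. *)

theory Defs
  imports "HOL-Computational_Algebra.Primes"
begin

text \<open>Vectors of F_q^(n+1), represented as functions nat => 'a supported on {0..n}.\<close>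
definition pg_vecs :: "nat \<Rightarrow> (nat \<Rightarrow> 'a::field) set" where
  "pg_vecs n = {v. \<forall>i>n. v i = 0}"

definition span1 :: "(nat \<Rightarrow> 'a::field) \<Rightarrow> (nat \<Rightarrow> 'a) set" where
  "span1 v = {(\<lambda>i. c * v i) | c. True}"

definition pg_points :: "nat \<Rightarrow> (nat \<Rightarrow> 'a::field) set set" where
  "pg_points n = {span1 v | v. v \<in> pg_vecs n \<and> v \<noteq> (\<lambda>i. 0)}"

definition pg_hyperplane :: "nat \<Rightarrow> (nat \<Rightarrow> 'a::field) \<Rightarrow> (nat \<Rightarrow> 'a) set set" where
  "pg_hyperplane n a = {P \<in> pg_points n. \<forall>w\<in>P. (\<Sum>i\<le>n. a i * w i) = 0}"

definition pg_hyperplanes :: "nat \<Rightarrow> (nat \<Rightarrow> 'a::field) set set set" where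
  "pg_hyperplanes n = {pg_hyperplane n a | a. a \<in> pg_vecs n \<and> a \<noteq> (\<lambda>i. 0)}"

definition additive_under :: "'v set \<Rightarrow> 'v set set \<Rightarrow> 'g::ab_group_add itself \<Rightarrow> bool" where
  "additive_under V Bs _ \<longleftrightarrow> (\<exists>f :: 'v \<Rightarrow> 'g. inj_on f V \<and> (\<forall>B\<in>Bs. (\<Sum>x\<in>B. f x) = 0))"

definition elementary_abelian :: "'g::ab_group_add itself \<Rightarrow> bool" where
  "elementary_abelian _ \<longleftrightarrow> (\<exists>p::nat. prime p \<and> (\<forall>x::'g. (\<Sum>i<p. x) = 0))"

end

theory Submission
  imports Defs "HOL-Library.Cardinality" "HOL-Algebra.Algebraic_Closure_Type" "HOL-Algebra.Multiplicative_Group"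
begin

text \<open>Let \<open>Q = q^(n+1)\<close> and realise the field with \<open>Q\<close> elements as \<open>K = {x. x^Q = x}\<close> inside the
  algebraic closure of \<open>F_q\<close>. Choose an \<open>F_q\<close>-linear bijection \<open>L\<close> from \<open>F_q^(n+1)\<close> onto \<open>K\<close> and
  label the point \<open>\<langle>v\<rangle>\<close> by \<open>L(v)^(q-1)\<close>. The label does not depend on the representative, and it
  determines the point because \<open>z^(q-1) = 1\<close> holds exactly for the nonzero \<open>z \<in> F_q\<close>.
  For a hyperplane \<open>W\<close>, a subspace of dimension \<open>n \<ge> 2\<close>, the sum of \<open>L(v)^(q-1)\<close> over \<open>v \<in> W\<close>
  vanishes: on each line \<open>y + F_q z\<close> it is \<open>-L(z)^(q-1)\<close> by the power sums of \<open>F_q\<close>, and \<open>W\<close> is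
  the union of \<open>q^(n-1)\<close> parallel lines, a multiple of the characteristic. The nonzero vectors
  of \<open>W\<close> are \<open>q - 1 = -1\<close> copies of its points, so the labels of the points sum to zero as well.
  Finally, \<open>K\<close> and the given group are elementary abelian \<open>p\<close>-groups of the same order, hence
  isomorphic. Formally the label of a point \<open>P = \<langle>v\<rangle>\<close> is \<open>\<Sum>w\<in>P. L(w)^(q-1) = -L(v)^(q-1)\<close>,
  which avoids choosing representatives.\<close>

section \<open>Elementary abelian groups\<close>

definition nat_scale :: "nat \<Rightarrow> 'v::comm_monoid_add \<Rightarrow> 'v" where
  "nat_scale a x = (\<Sum>i<a. x)"

lemma nat_scale_0 [simp]: "nat_scale 0 x = 0"
  by (simp add: nat_scale_def)

lemma nat_scale_Suc: "nat_scale (Suc a) x = nat_scale a x + x"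
  by (simp add: nat_scale_def)

lemma nat_scale_zero_right [simp]: "nat_scale a 0 = 0"
  by (simp add: nat_scale_def)

lemma nat_scale_add_left: "nat_scale (a + b) x = nat_scale a x + nat_scale b x"
  by (induction b) (simp_all add: nat_scale_Suc add.assoc)

lemma nat_scale_mult: "nat_scale (a * b) x = nat_scale a (nat_scale b x)"
  by (induction a) (simp_all add: nat_scale_Suc nat_scale_add_left add.commute)

lemma nat_scale_add_right: "nat_scale a (x + y) = nat_scale a x + nat_scale a y"
  by (induction a) (simp_all add: nat_scale_Suc algebra_simps)

lemma nat_scale_sum: "nat_scale a (\<Sum>i\<in>I. f i) = (\<Sum>i\<in>I. nat_scale a (f i))"
  by (induction I rule: infinite_finite_induct) (simp_all add: nat_scale_add_right)

lemma nat_scale_eq_of_nat_mult: "nat_scale a x = of_nat a * (x :: 'r::semiring_1)"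
  by (simp add: nat_scale_def)

lemma nat_scale_mod:
  assumes "nat_scale p x = 0"
  shows "nat_scale a x = nat_scale (a mod p) x"
proof -
  have "nat_scale a x = nat_scale (a div p * p) x + nat_scale (a mod p) x"
    by (simp flip: nat_scale_add_left)
  then show ?thesis
    by (simp add: nat_scale_mult assms)
qed

lemma nat_scale_mem_add_closed:
  assumes "0 \<in> S" "\<And>x y. x \<in> S \<Longrightarrow> y \<in> S \<Longrightarrow> x + y \<in> S" "x \<in> S"
  shows "nat_scale a x \<in> S"
  by (induction a) (simp_all add: nat_scale_Suc assms)

lemma sum_mem_add_closed:
  assumes "0 \<in> S" "\<And>x y. x \<in> S \<Longrightarrow> y \<in> S \<Longrightarrow> x + y \<in> S" "\<And>i. i \<in> I \<Longrightarrow> f i \<in> S"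
  shows "(\<Sum>i\<in>I. f i) \<in> S"
  using assms(3) by (induction I rule: infinite_finite_induct) (simp_all add: assms(1,2))

definition coord_space :: "'s::zero set \<Rightarrow> nat \<Rightarrow> (nat \<Rightarrow> 's) set" where
  "coord_space A m = {c. (\<forall>i<m. c i \<in> A) \<and> (\<forall>i\<ge>m. c i = 0)}"

lemma coord_space_0: "coord_space A 0 = {\<lambda>_. 0}"
  by (auto simp: coord_space_def)

lemma card_coord_space:
  assumes "finite A"
  shows "card (coord_space A m) = card A ^ m"
proof -
  have "bij_betw (\<lambda>c. restrict c {..<m}) (coord_space A m) (PiE {..<m} (\<lambda>_. A))"
    by (rule bij_betwI[where g = "\<lambda>f i. if i < m then f i else 0"])
       (auto simp: coord_space_def fun_eq_iff PiE_iff extensional_def)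
  then show ?thesis
    by (simp add: bij_betw_same_card card_PiE assms)
qed

definition lincomb :: "('s \<Rightarrow> 'v \<Rightarrow> 'v) \<Rightarrow> 'v list \<Rightarrow> (nat \<Rightarrow> 's) \<Rightarrow> 'v::comm_monoid_add" where
  "lincomb smul bs c = (\<Sum>i<length bs. smul (c i) (bs ! i))"

lemma lincomb_cong: "(\<And>i. i < length bs \<Longrightarrow> c i = d i) \<Longrightarrow> lincomb smul bs c = lincomb smul bs d"
  by (simp add: lincomb_def)

lemma lincomb_snoc: "lincomb smul (bs @ [x]) c = lincomb smul bs c + smul (c (length bs)) x"
  by (simp add: lincomb_def nth_append)

lemma inj_on_lincomb_snoc:
  fixes smul :: "'s::zero \<Rightarrow> 'v::cancel_comm_monoid_add \<Rightarrow> 'v"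
  assumes inj: "inj_on (lincomb smul bs) (coord_space A (length bs))"
    and last_eq: "\<And>c d. c \<in> coord_space A (Suc (length bs)) \<Longrightarrow> d \<in> coord_space A (Suc (length bs)) \<Longrightarrow>
      lincomb smul (bs @ [x]) c = lincomb smul (bs @ [x]) d \<Longrightarrow> c (length bs) = d (length bs)"
  shows "inj_on (lincomb smul (bs @ [x])) (coord_space A (Suc (length bs)))"
proof (rule inj_onI)
  fix c d
  assume c: "c \<in> coord_space A (Suc (length bs))" and d: "d \<in> coord_space A (Suc (length bs))"
    and eq: "lincomb smul (bs @ [x]) c = lincomb smul (bs @ [x]) d"
  define m where "m = length bs"
  have cd: "c m = d m"
    using last_eq[OF c d eq] by (simp add: m_def)
  have c': "c(m := 0) \<in> coord_space A m" and d': "d(m := 0) \<in> coord_space A m"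
    using c d by (auto simp: coord_space_def m_def)
  have "lincomb smul bs (c(m := 0)) = lincomb smul bs (d(m := 0))"
    using eq cd by (simp add: lincomb_snoc m_def lincomb_cong[of bs "c(length bs := 0)" c]
        lincomb_cong[of bs "d(length bs := 0)" d])
  then have "c(m := 0) = d(m := 0)"
    using inj c' d' by (auto simp: m_def dest: inj_onD)
  then show "c = d"
    using cd by (metis fun_upd_triv fun_upd_upd)
qed

lemma length_le_card_if_inj_on_lincomb:
  assumes "finite S" "finite A" "card A \<ge> 2"
    and "lincomb smul bs ` coord_space A (length bs) \<subseteq> S" "inj_on (lincomb smul bs) (coord_space A (length bs))"
  shows "length bs \<le> card S"
proof -
  have "length bs < card A ^ length bs"
    using less_exp[of "length bs"] power_mono[OF \<open>card A \<ge> 2\<close>, of "length bs"] by linarith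
  also have "\<dots> = card (lincomb smul bs ` coord_space A (length bs))"
    using assms(5) by (simp add: card_image card_coord_space \<open>finite A\<close>)
  also have "\<dots> \<le> card S"
    using assms(1,4) by (rule card_mono)
  finally show ?thesis
    by simp
qed

text \<open>A longest list whose combination map is injective already spans \<open>S\<close>: by \<open>independent\<close>,
  any vector outside the span could be appended to it.\<close>

lemma exists_lincomb_basis:
  fixes smul :: "'s::zero \<Rightarrow> 'v::cancel_comm_monoid_add \<Rightarrow> 'v"
  assumes "finite S" "finite A" "card A \<ge> 2"
    and closed: "\<And>bs c. set bs \<subseteq> S \<Longrightarrow> c \<in> coord_space A (length bs) \<Longrightarrow> lincomb smul bs c \<in> S"
    and independent: "\<And>bs x c d. set bs \<subseteq> S \<Longrightarrow> x \<in> S \<Longrightarrow>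
      c \<in> coord_space A (Suc (length bs)) \<Longrightarrow> d \<in> coord_space A (Suc (length bs)) \<Longrightarrow>
      c (length bs) \<noteq> d (length bs) \<Longrightarrow> lincomb smul (bs @ [x]) c = lincomb smul (bs @ [x]) d \<Longrightarrow>
      x \<in> lincomb smul bs ` coord_space A (length bs)"
  shows "\<exists>bs. set bs \<subseteq> S \<and> bij_betw (lincomb smul bs) (coord_space A (length bs)) S"
proof -
  define M where "M = {length bs | bs. set bs \<subseteq> S \<and> inj_on (lincomb smul bs) (coord_space A (length bs))}"
  have "m \<le> card S" if m: "m \<in> M" for m
  proof -
    obtain bs where bs: "m = length bs" "set bs \<subseteq> S" "inj_on (lincomb smul bs) (coord_space A (length bs))"
      using m by (auto simp: M_def)
    then have "lincomb smul bs ` coord_space A (length bs) \<subseteq> S"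
      using closed by blast
    then show ?thesis
      using length_le_card_if_inj_on_lincomb[OF assms(1-3)] bs by blast
  qed
  then have "finite M"
    using finite_nat_set_iff_bounded_le by blast
  moreover have "0 \<in> M"
    unfolding M_def by (intro CollectI exI[of _ "[]"]) (simp add: coord_space_0)
  ultimately have "Max M \<in> M"
    by (intro Max_in) auto
  then obtain bs where bs: "set bs \<subseteq> S" "inj_on (lincomb smul bs) (coord_space A (length bs))"
    and longest: "Max M = length bs"
    unfolding M_def by blast
  have "lincomb smul bs ` coord_space A (length bs) = S"
  proof (rule ccontr)
    assume "lincomb smul bs ` coord_space A (length bs) \<noteq> S"
    then obtain x where x: "x \<in> S" "x \<notin> lincomb smul bs ` coord_space A (length bs)"
      using closed bs(1) by auto
    have "inj_on (lincomb smul (bs @ [x])) (coord_space A (Suc (length bs)))"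
    proof (rule inj_on_lincomb_snoc[OF bs(2)])
      show "c (length bs) = d (length bs)"
        if "c \<in> coord_space A (Suc (length bs))" "d \<in> coord_space A (Suc (length bs))"
          "lincomb smul (bs @ [x]) c = lincomb smul (bs @ [x]) d" for c d
        using independent[OF bs(1) x(1) that(1,2) _ that(3)] x(2) by blast
    qed
    then have "Suc (length bs) \<in> M"
      using bs x unfolding M_def by (intro CollectI exI[of _ "bs @ [x]"]) auto
    then show False
      using Max_ge[OF \<open>finite M\<close>, of "Suc (length bs)"] longest by simp
  qed
  then show ?thesis
    using bs by (auto simp: bij_betw_def)
qed

definition elementary_abelian_subgroup :: "nat \<Rightarrow> 'v::ab_group_add set \<Rightarrow> bool" where
  "elementary_abelian_subgroup p S \<longleftrightarrow>
     Factorial_Ring.prime p \<and> 0 \<in> S \<and> (\<forall>x\<in>S. \<forall>y\<in>S. x + y \<in> S) \<and> (\<forall>x\<in>S. nat_scale p x = 0)"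

lemma lincomb_nat_scale_add:
  "lincomb nat_scale bs c + lincomb nat_scale bs d = lincomb nat_scale bs (\<lambda>i. c i + d i)"
  by (simp add: lincomb_def nat_scale_add_left sum.distrib)

lemma nat_scale_lincomb_nat_scale:
  "nat_scale a (lincomb nat_scale bs c) = lincomb nat_scale bs (\<lambda>i. a * c i)"
  by (simp add: lincomb_def nat_scale_sum nat_scale_mult)

lemma lincomb_nat_scale_mod:
  assumes "\<And>y. y \<in> set bs \<Longrightarrow> nat_scale p y = 0"
  shows "lincomb nat_scale bs c = lincomb nat_scale bs (\<lambda>i. if i < length bs then c i mod p else 0)"
  unfolding lincomb_def by (rule sum.cong) (auto intro!: nat_scale_mod assms)

lemma lincomb_nat_scale_mod_in_image:
  assumes "\<And>y. y \<in> set bs \<Longrightarrow> nat_scale p y = 0" "p > 0"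
  shows "lincomb nat_scale bs c \<in> lincomb nat_scale bs ` coord_space {..<p} (length bs)"
proof -
  have "(\<lambda>i. if i < length bs then c i mod p else 0) \<in> coord_space {..<p} (length bs)"
    using assms(2) by (auto simp: coord_space_def)
  then show ?thesis
    by (subst lincomb_nat_scale_mod[OF assms(1)]) auto
qed

lemma elementary_abelian_lincomb_closed:
  assumes "elementary_abelian_subgroup p S" "set bs \<subseteq> S"
  shows "lincomb nat_scale bs c \<in> S"
  using assms unfolding elementary_abelian_subgroup_def lincomb_def
  by (intro sum_mem_add_closed nat_scale_mem_add_closed) auto

lemma elementary_abelian_uminus:
  assumes "elementary_abelian_subgroup p S" "x \<in> S"
  shows "- x = nat_scale (p - 1) x"
proof -
  have "p > 0"
    using assms(1) prime_gt_0_nat by (auto simp: elementary_abelian_subgroup_def)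
  then have "nat_scale (p - 1) x + x = nat_scale p x"
    by (metis Suc_diff_1 nat_scale_Suc)
  also have "\<dots> = 0"
    using assms by (simp add: elementary_abelian_subgroup_def)
  finally show ?thesis
    by (metis add.commute neg_eq_iff_add_eq_0)
qed

lemma elementary_abelian_mem_span_if_nat_scale:
  assumes S: "elementary_abelian_subgroup p S" "set bs \<subseteq> S" "x \<in> S"
    and e: "0 < e" "e < p" and ex: "nat_scale e x = lincomb nat_scale bs c"
  shows "x \<in> lincomb nat_scale bs ` coord_space {..<p} (length bs)"
proof -
  have p: "Factorial_Ring.prime p" and zero: "\<And>y. y \<in> S \<Longrightarrow> nat_scale p y = 0"
    using S(1) by (simp_all add: elementary_abelian_subgroup_def)
  have "coprime e p"
    using e p by (metis coprime_commute dvd_imp_le not_le prime_imp_coprime)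
  then obtain u y where uy: "e * u = p * y + 1"
    using bezout_nat[of e p] e by auto
  have "x = nat_scale (y * p) x + x"
    using zero[OF S(3)] by (simp add: nat_scale_mult)
  also have "\<dots> = nat_scale u (nat_scale e x)"
    using uy by (simp add: nat_scale_Suc mult.commute flip: nat_scale_mult)
  also have "\<dots> = lincomb nat_scale bs (\<lambda>i. u * c i)"
    by (simp add: ex nat_scale_lincomb_nat_scale)
  finally show ?thesis
    using lincomb_nat_scale_mod_in_image[of bs p] zero S(2) e by auto
qed

lemma elementary_abelian_basis:
  assumes S: "elementary_abelian_subgroup p S" and "finite S"
  shows "\<exists>bs. set bs \<subseteq> S \<and> bij_betw (lincomb nat_scale bs) (coord_space {..<p} (length bs)) S"
proof (rule exists_lincomb_basis)
  show "card {..<p} \<ge> 2"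
    using S by (simp add: elementary_abelian_subgroup_def prime_ge_2_nat)
  show "lincomb nat_scale bs c \<in> S" if "set bs \<subseteq> S" for bs and c :: "nat \<Rightarrow> nat"
    using elementary_abelian_lincomb_closed[OF S that] .
  fix bs x c d
  assume bs: "set bs \<subseteq> S" and x: "x \<in> S"
    and c: "c \<in> coord_space {..<p} (Suc (length bs))" and d: "d \<in> coord_space {..<p} (Suc (length bs))"
    and neq: "c (length bs) \<noteq> d (length bs)"
    and eq: "lincomb nat_scale (bs @ [x]) c = lincomb nat_scale (bs @ [x]) d"
  have solve: "x \<in> lincomb nat_scale bs ` coord_space {..<p} (length bs)"
    if lt: "d' (length bs) < c' (length bs)" "c' (length bs) < p"
      and eq': "lincomb nat_scale (bs @ [x]) c' = lincomb nat_scale (bs @ [x]) d'" for c' d'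
  proof -
    define e where "e = c' (length bs) - d' (length bs)"
    have "nat_scale (c' (length bs)) x = nat_scale e x + nat_scale (d' (length bs)) x"
      using lt by (simp add: e_def flip: nat_scale_add_left)
    then have "lincomb nat_scale bs c' + nat_scale e x = lincomb nat_scale bs d'"
      using eq' by (simp add: lincomb_snoc flip: add.assoc)
    then have "nat_scale e x = lincomb nat_scale bs d' + - lincomb nat_scale bs c'"
      by (simp add: algebra_simps)
    also have "\<dots> = lincomb nat_scale bs (\<lambda>i. d' i + (p - 1) * c' i)"
      using elementary_abelian_uminus[OF S elementary_abelian_lincomb_closed[OF S bs]]
      by (simp add: nat_scale_lincomb_nat_scale lincomb_nat_scale_add)
    finally show ?thesis
      using lt by (intro elementary_abelian_mem_span_if_nat_scale[OF S bs x]) (auto simp: e_def)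
  qed
  have "c (length bs) < p" "d (length bs) < p"
    using c d by (auto simp: coord_space_def)
  then show "x \<in> lincomb nat_scale bs ` coord_space {..<p} (length bs)"
    using neq solve[of d c, OF _ _ eq] solve[of c d, OF _ _ eq[symmetric]] by linarith
qed (use \<open>finite S\<close> in simp_all)

lemma card_elementary_abelian:
  assumes "elementary_abelian_subgroup p S" "finite S"
  shows "\<exists>m. card S = p ^ m"
  using elementary_abelian_basis[OF assms]
  by (metis bij_betw_same_card card_coord_space card_lessThan finite_lessThan)

lemma lincomb_nat_scale_inv_into_add:
  assumes \<Phi>: "bij_betw (lincomb nat_scale bs) (coord_space {..<p} (length bs)) S"
    and "p > 0" "\<And>y. y \<in> set bs \<Longrightarrow> nat_scale p y = 0"
    and "\<And>y. y \<in> set bs' \<Longrightarrow> nat_scale p y = 0" "length bs' = length bs"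
    and "x \<in> S" "y \<in> S"
  defines "coords \<equiv> inv_into (coord_space {..<p} (length bs)) (lincomb nat_scale bs)"
  shows "lincomb nat_scale bs' (coords (x + y)) = lincomb nat_scale bs' (coords x) + lincomb nat_scale bs' (coords y)"
proof -
  define D where "D = coord_space {..<p} (length bs)"
  obtain cx cy where c: "cx \<in> D" "cy \<in> D" "x = lincomb nat_scale bs cx" "y = lincomb nat_scale bs cy"
    using assms(6,7) \<Phi> unfolding bij_betw_def D_def by blast
  define r where "r i = (if i < length bs then (cx i + cy i) mod p else 0)" for i
  have "r \<in> D"
    using \<open>p > 0\<close> by (auto simp: r_def D_def coord_space_def)
  have "x + y = lincomb nat_scale bs (\<lambda>i. cx i + cy i)"
    using c by (simp add: lincomb_nat_scale_add)
  also have "\<dots> = lincomb nat_scale bs r"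
    unfolding r_def by (rule lincomb_nat_scale_mod[OF assms(3)])
  finally have "lincomb nat_scale bs' (coords (x + y)) = lincomb nat_scale bs' r"
    using \<Phi> \<open>r \<in> D\<close> by (simp add: coords_def D_def bij_betw_def)
  also have "\<dots> = lincomb nat_scale bs' (\<lambda>i. cx i + cy i)"
    unfolding r_def assms(5)[symmetric] by (rule lincomb_nat_scale_mod[OF assms(4), symmetric])
  also have "\<dots> = lincomb nat_scale bs' (coords x) + lincomb nat_scale bs' (coords y)"
    using c \<Phi> by (simp add: coords_def D_def bij_betw_def lincomb_nat_scale_add)
  finally show ?thesis .
qed

lemma elementary_abelian_iso:
  assumes S: "elementary_abelian_subgroup p S" "finite S"
    and T: "elementary_abelian_subgroup p T" "finite T"
    and card_eq: "card S = card T"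
  shows "\<exists>\<psi>. bij_betw \<psi> S T \<and> (\<forall>x\<in>S. \<forall>y\<in>S. \<psi> (x + y) = \<psi> x + \<psi> y)"
proof -
  have p: "p > 1"
    using S(1) prime_gt_1_nat by (auto simp: elementary_abelian_subgroup_def)
  obtain bsS where bsS: "set bsS \<subseteq> S" "bij_betw (lincomb nat_scale bsS) (coord_space {..<p} (length bsS)) S"
    using elementary_abelian_basis[OF S] by blast
  obtain bsT where bsT: "set bsT \<subseteq> T" "bij_betw (lincomb nat_scale bsT) (coord_space {..<p} (length bsT)) T"
    using elementary_abelian_basis[OF T] by blast
  have "p ^ length bsS = p ^ length bsT"
    using bij_betw_same_card[OF bsS(2)] bij_betw_same_card[OF bsT(2)] card_eq
    by (simp add: card_coord_space)
  then have len: "length bsT = length bsS"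
    using p by simp
  define \<psi> where "\<psi> = lincomb nat_scale bsT \<circ> inv_into (coord_space {..<p} (length bsS)) (lincomb nat_scale bsS)"
  have "bij_betw \<psi> S T"
    unfolding \<psi>_def using bij_betw_inv_into[OF bsS(2)] bsT(2) len by (auto intro: bij_betw_trans)
  moreover have "\<psi> (x + y) = \<psi> x + \<psi> y" if "x \<in> S" "y \<in> S" for x y
    unfolding \<psi>_def o_def using S(1) T(1) bsS(1) bsT(1) p that
    by (intro lincomb_nat_scale_inv_into_add[OF bsS(2)] len) (auto simp: elementary_abelian_subgroup_def)
  ultimately show ?thesis
    by blast
qed

lemma elementary_abelian_same_prime:
  assumes "elementary_abelian_subgroup p S" "finite S" "elementary_abelian_subgroup r T" "finite T"
    and "card S = card T" "card S > 1"
  shows "p = r"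
proof -
  obtain a b where "card S = p ^ a" "card T = r ^ b"
    using card_elementary_abelian assms(1-4) by metis
  moreover have "Factorial_Ring.prime p" "Factorial_Ring.prime r"
    using assms(1,3) by (simp_all add: elementary_abelian_subgroup_def)
  ultimately show ?thesis
    using assms(5,6) prime_power_inj''[of p r a b] by auto
qed

lemma additive_on_sum:
  fixes \<psi> :: "'v::comm_monoid_add \<Rightarrow> 'w::ab_group_add"
  assumes "0 \<in> S" "\<And>x y. x \<in> S \<Longrightarrow> y \<in> S \<Longrightarrow> x + y \<in> S"
    and additive: "\<And>x y. x \<in> S \<Longrightarrow> y \<in> S \<Longrightarrow> \<psi> (x + y) = \<psi> x + \<psi> y"
    and "\<And>i. i \<in> I \<Longrightarrow> F i \<in> S"
  shows "\<psi> (\<Sum>i\<in>I. F i) = (\<Sum>i\<in>I. \<psi> (F i))"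
  using assms(4)
proof (induction I rule: infinite_finite_induct)
  case (empty)
  show ?case
    using additive[OF assms(1) assms(1)] by simp
next
  case (insert i I)
  then show ?case
    by (simp add: additive sum_mem_add_closed[OF assms(1,2)])
qed (use additive[OF assms(1) assms(1)] in simp)

lemma additive_underI:
  fixes F :: "'v \<Rightarrow> 'a::comm_monoid_add" and \<psi> :: "'a \<Rightarrow> 'g::ab_group_add"
  assumes "inj_on F V" "F ` V \<subseteq> S" "\<And>B. B \<in> Bs \<Longrightarrow> B \<subseteq> V" "\<And>B. B \<in> Bs \<Longrightarrow> (\<Sum>x\<in>B. F x) = 0"
    and "0 \<in> S" "\<And>x y. x \<in> S \<Longrightarrow> y \<in> S \<Longrightarrow> x + y \<in> S"
    and "inj_on \<psi> S" "\<And>x y. x \<in> S \<Longrightarrow> y \<in> S \<Longrightarrow> \<psi> (x + y) = \<psi> x + \<psi> y"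
  shows "additive_under V Bs TYPE('g)"
proof -
  have "\<psi> 0 = 0"
    using assms(8)[OF assms(5) assms(5)] by simp
  then have "(\<Sum>x\<in>B. (\<psi> \<circ> F) x) = 0" if "B \<in> Bs" for B
    using additive_on_sum[OF assms(5,6,8), of B F] assms(2-4) that by auto
  moreover have "inj_on (\<psi> \<circ> F) V"
    using comp_inj_on[OF assms(1) inj_on_subset[OF assms(7) assms(2)]] .
  ultimately show ?thesis
    unfolding additive_under_def by blast
qed

section \<open>Finite fields\<close>

lemma elementary_abelian_subgroup_CHAR:
  assumes "Factorial_Ring.prime CHAR('r::comm_ring_1)"
    and "0 \<in> S" "\<And>x y. x \<in> S \<Longrightarrow> y \<in> S \<Longrightarrow> x + y \<in> (S :: 'r set)"
  shows "elementary_abelian_subgroup CHAR('r) S"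
  using assms by (simp add: elementary_abelian_subgroup_def nat_scale_eq_of_nat_mult)

lemma prime_CHAR_finite_field: "Factorial_Ring.prime CHAR('a::{finite,field})"
  using prime_CHAR_semidom finite_imp_CHAR_pos[OF finite_class.finite_UNIV] by blast

lemma finite_field_card_ge_2: "card (UNIV :: 'a::{finite,field} set) \<ge> 2"
  using card_mono[of "UNIV :: 'a set" "{0, 1}"] by simp

lemma finite_field_card_CHAR_power: "\<exists>k\<ge>1. card (UNIV :: 'a::{finite,field} set) = CHAR('a) ^ k"
proof -
  have "elementary_abelian_subgroup CHAR('a) (UNIV :: 'a set)"
    by (intro elementary_abelian_subgroup_CHAR prime_CHAR_finite_field) simp_all
  then obtain k where k: "CARD('a) = CHAR('a) ^ k"
    using card_elementary_abelian[OF _ finite_class.finite_UNIV] by blast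
  moreover have "k \<noteq> 0"
    using k finite_field_card_ge_2[where 'a = 'a] by (intro notI) simp
  ultimately show ?thesis
    by (intro exI[of _ k]) simp
qed

lemma of_nat_card_finite_field [simp]: "of_nat CARD('a) = (0 :: 'a::{finite,field})"
proof -
  obtain k where "k \<ge> 1" "CARD('a) = CHAR('a) ^ k"
    using finite_field_card_CHAR_power by blast
  then have "CHAR('a) dvd CARD('a)"
    by (simp add: dvd_power)
  then show ?thesis
    by (simp add: of_nat_eq_0_iff_char_dvd)
qed

lemma finite_field_power_card_minus_1:
  fixes c :: "'a::{finite,field}"
  assumes "c \<noteq> 0"
  shows "c ^ (CARD('a) - 1) = 1"
proof -
  let ?R = "ring_of_type_algebra :: 'a ring"
  let ?G = "Multiplicative_Group.mult_of ?R"
  have pow: "x [^]\<^bsub>?R\<^esub> k = x ^ k" for x :: 'a and k :: nat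
    by (induction k) (simp_all add: ring_of_type_algebra_def)
  have "group ?G"
    by (intro field.field_mult_group field_from_type_algebra)
  moreover have "c \<in> carrier ?G"
    using assms by (simp add: ring_of_type_algebra_def)
  ultimately have "c [^]\<^bsub>?G\<^esub> Coset.order ?G = \<one>\<^bsub>?G\<^esub>"
    by (rule group.pow_order_eq_1)
  then show ?thesis
    unfolding Multiplicative_Group.nat_pow_mult_of pow
    by (simp add: Coset.order_def card_Diff_singleton ring_of_type_algebra_def)
qed

lemma finite_field_power_card [simp]: "(c :: 'a::{finite,field}) ^ CARD('a) = c"
proof (cases "c = 0")
  case False
  have "c ^ CARD('a) = c * c ^ (CARD('a) - 1)"
    using finite_field_card_ge_2[where 'a = 'a] by (simp add: power_eq_if)
  then show ?thesis
    using finite_field_power_card_minus_1[OF False] by simp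
qed simp

lemma finite_field_power_card_power [simp]: "(c :: 'a::{finite,field}) ^ (CARD('a) ^ j) = c"
  by (induction j) (simp_all add: power_mult)

lemma sum_powers_finite_field_eq_0:
  assumes "i < CARD('a) - 1"
  shows "(\<Sum>c::'a::{finite,field}\<in>UNIV. c ^ i) = 0"
proof (cases "i = 0")
  case False
  have "{x::'a. x ^ i = 1} = {x. poly (monom 1 i - 1) x = 0}"
    by (simp add: poly_monom)
  moreover have "poly (monom 1 i - 1) 0 \<noteq> (0 :: 'a)"
    using False by (simp add: poly_monom power_0_left)
  ultimately have "card {x::'a. x ^ i = 1} \<le> degree (monom 1 i - 1 :: 'a poly)"
    by (metis card_poly_roots_bound poly_0)
  also have "\<dots> \<le> i"
    by (metis degree_diff_le degree_monom_le degree_1 le0)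
  also have "i < card (UNIV - {0 :: 'a})"
    using assms by (simp add: card_Diff_singleton)
  finally have "\<not> UNIV - {0} \<subseteq> {x::'a. x ^ i = 1}"
    using card_mono[of "{x::'a. x ^ i = 1}" "UNIV - {0}"] by auto
  then obtain a :: 'a where a: "a \<noteq> 0" "a ^ i \<noteq> 1"
    by auto
  have "(\<Sum>c::'a\<in>UNIV. c ^ i) = (\<Sum>c::'a\<in>UNIV. (a * c) ^ i)"
    by (rule sum.reindex_bij_witness[of _ "\<lambda>y. a * y" "\<lambda>y. y / a"]) (use a in simp_all)
  also have "\<dots> = a ^ i * (\<Sum>c::'a\<in>UNIV. c ^ i)"
    by (simp add: power_mult_distrib sum_distrib_left)
  finally have "(a ^ i - 1) * (\<Sum>c::'a\<in>UNIV. c ^ i) = 0"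
    by (simp add: algebra_simps)
  then show ?thesis
    using a by simp
qed simp

lemma sum_powers_finite_field_card_minus_1: "(\<Sum>c::'a::{finite,field}\<in>UNIV. c ^ (CARD('a) - 1)) = -1"
proof -
  have ge2: "CARD('a) \<ge> 2"
    by (rule finite_field_card_ge_2)
  have "(\<Sum>c::'a\<in>UNIV. c ^ (CARD('a) - 1)) = (\<Sum>c\<in>UNIV - {0::'a}. c ^ (CARD('a) - 1))"
    using ge2 by (intro sum.mono_neutral_right) (auto simp: power_0_left)
  also have "\<dots> = (\<Sum>c\<in>UNIV - {0::'a}. 1)"
    by (intro sum.cong refl finite_field_power_card_minus_1) simp
  also have "\<dots> = of_nat CARD('a) - 1"
    using ge2 by (simp add: card_Diff_singleton of_nat_diff)
  finally show ?thesis
    by simp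
qed

lemma of_nat_card_alg_closure [simp]: "of_nat CARD('a) = (0 :: 'a::{finite,field} alg_closure)"
  by (metis of_nat_card_finite_field to_ac_0 to_ac_of_nat)

lemma sum_line_power_card_minus_1:
  fixes y z :: "'a::{finite,field} alg_closure"
  shows "(\<Sum>c::'a\<in>UNIV. (y + to_ac c * z) ^ (CARD('a) - 1)) = - (z ^ (CARD('a) - 1))"
proof -
  define N where "N = CARD('a) - 1"
  have "(\<Sum>c::'a\<in>UNIV. (y + to_ac c * z) ^ N)
      = (\<Sum>c::'a\<in>UNIV. \<Sum>k\<le>N. of_nat (N choose k) * (to_ac c * z) ^ k * y ^ (N - k))"
    by (intro sum.cong refl) (subst add.commute, rule binomial_ring)
  also have "\<dots> = (\<Sum>k\<le>N. \<Sum>c::'a\<in>UNIV. of_nat (N choose k) * z ^ k * y ^ (N - k) * to_ac (c ^ k))"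
    by (subst sum.swap) (simp add: power_mult_distrib mult_ac)
  also have "\<dots> = (\<Sum>k\<le>N. of_nat (N choose k) * z ^ k * y ^ (N - k) * to_ac (\<Sum>c::'a\<in>UNIV. c ^ k))"
    by (simp add: to_ac_sum sum_distrib_left)
  also have "\<dots> = (\<Sum>k\<le>N. if k = N then - (z ^ N) else 0)"
  proof (intro sum.cong refl)
    have top: "(\<Sum>c::'a\<in>UNIV. c ^ N) = -1"
      unfolding N_def by (rule sum_powers_finite_field_card_minus_1)
    have low: "(\<Sum>c::'a\<in>UNIV. c ^ k) = 0" if "k < N" for k
      using that unfolding N_def by (rule sum_powers_finite_field_eq_0)
    show "of_nat (N choose k) * z ^ k * y ^ (N - k) * to_ac (\<Sum>c::'a\<in>UNIV. c ^ k) =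
        (if k = N then - (z ^ N) else 0)" if "k \<in> {..N}" for k
      using that by (auto simp: top low)
  qed
  finally show ?thesis
    by (simp add: N_def)
qed

lemma alg_closure_root_of_unity_in_base:
  fixes z :: "'a::{finite,field} alg_closure"
  assumes "z ^ (CARD('a) - 1) = 1"
  shows "\<exists>c. c \<noteq> 0 \<and> z = to_ac c"
proof -
  define N where "N = CARD('a) - 1"
  define P :: "'a alg_closure poly" where "P = monom 1 N - 1"
  have root_iff: "poly P x = 0 \<longleftrightarrow> x ^ N = 1" for x
    by (simp add: P_def poly_monom)
  have "N \<noteq> 0"
    using finite_field_card_ge_2[where 'a = 'a] by (simp add: N_def)
  then have "P \<noteq> 0"
    using root_iff[of 0] by (auto simp: power_0_left)
  have "degree P \<le> N"
    unfolding P_def by (metis degree_diff_le degree_monom_le degree_1 le0)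
  then have card_roots: "card {x. poly P x = 0} \<le> N"
    using card_poly_roots_bound[OF \<open>P \<noteq> 0\<close>] by linarith
  have sub: "to_ac ` (UNIV - {0}) \<subseteq> {x. poly P x = 0}"
  proof
    fix x assume "x \<in> to_ac ` (UNIV - {0 :: 'a})"
    then obtain c where "c \<noteq> 0" "x = to_ac c"
      by blast
    then have "x ^ N = to_ac (c ^ N)"
      by simp
    also have "c ^ N = 1"
      using \<open>c \<noteq> 0\<close> unfolding N_def by (rule finite_field_power_card_minus_1)
    finally show "x \<in> {x. poly P x = 0}"
      by (simp add: root_iff)
  qed
  have "card (to_ac ` (UNIV - {0 :: 'a})) = N"
    by (simp add: card_image inj_on_subset[OF inj_to_ac] card_Diff_singleton N_def)
  then have "to_ac ` (UNIV - {0}) = {x. poly P x = 0}"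
    using card_roots card_mono[OF poly_roots_finite[OF \<open>P \<noteq> 0\<close>] sub]
    by (intro card_subset_eq[OF poly_roots_finite[OF \<open>P \<noteq> 0\<close>] sub]) linarith
  moreover have "poly P z = 0"
    using assms by (simp add: root_iff N_def)
  ultimately show ?thesis
    by auto
qed

section \<open>The field with \<open>q^m\<close> elements in the algebraic closure\<close>

definition power_fixed :: "nat \<Rightarrow> 'r::comm_ring_1 set" where
  "power_fixed Q = {x. x ^ Q = x}"

lemma power_fixed_0: "Q > 0 \<Longrightarrow> 0 \<in> power_fixed Q"
  by (simp add: power_fixed_def power_0_left)

lemma power_fixed_mult: "x \<in> power_fixed Q \<Longrightarrow> y \<in> power_fixed Q \<Longrightarrow> x * y \<in> power_fixed Q"
  by (simp add: power_fixed_def power_mult_distrib)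

lemma power_fixed_power: "x \<in> power_fixed Q \<Longrightarrow> x ^ k \<in> power_fixed Q"
  by (simp add: power_fixed_def flip: power_mult) (metis mult.commute power_mult)

lemma power_fixed_add:
  fixes x y :: "'r::comm_ring_1"
  assumes "Factorial_Ring.prime CHAR('r)" "Q = CHAR('r) ^ k"
    and "x \<in> power_fixed Q" "y \<in> power_fixed Q"
  shows "x + y \<in> power_fixed Q"
proof -
  have "(x + y) ^ Q = x ^ Q + y ^ Q"
    using assms(1,2) by (rule freshmans_dream')
  then show ?thesis
    using assms(3,4) by (simp add: power_fixed_def)
qed

lemma to_ac_in_power_fixed: "to_ac (c :: 'a::{finite,field}) \<in> power_fixed (CARD('a) ^ j)"
  by (simp add: power_fixed_def flip: to_ac_power)

lemma dvd_pderiv_if_square_dvd: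
  fixes p q :: "'r::idom poly"
  assumes "q ^ 2 dvd p"
  shows "q dvd pderiv p"
proof -
  obtain r where "p = q ^ 2 * r"
    using assms by (elim dvdE)
  then have "pderiv p = q * (q * pderiv r + 2 * r * pderiv q)"
    by (simp add: pderiv_mult power2_eq_square algebra_simps)
  then show ?thesis
    by simp
qed

lemma proots_prod_linear_factors: "proots (\<Prod>x\<in>#A. [:-x, 1:]) = (A :: 'r::idom multiset)"
proof (induction A)
  case (add x A)
  have "(\<Prod>x\<in>#A. [:-x, 1:]) \<noteq> 0"
    by (auto simp: prod_mset_zero_iff)
  then show ?case
    using add by (simp add: proots_mult del: mult_pCons_left)
qed simp

lemma size_proots_alg_closed:
  fixes p :: "'r::alg_closed_field poly"
  assumes "p \<noteq> 0"
  shows "size (proots p) = degree p"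
proof -
  obtain A where A: "size A = degree p" "p = smult (lead_coeff p) (\<Prod>x\<in>#A. [:-x, 1:])"
    using alg_closed_imp_factorization[OF assms] by blast
  have "proots p = A"
    using assms by (subst A(2)) (simp add: proots_prod_linear_factors)
  then show ?thesis
    using A(1) by simp
qed

lemma card_roots_alg_closed:
  fixes p :: "'r::alg_closed_field poly"
  assumes "p \<noteq> 0" and simple: "\<And>a. \<not> [:-a, 1:] ^ 2 dvd p"
  shows "card {x. poly p x = 0} = degree p"
proof -
  have "count (proots p) a = 1" if "a \<in># proots p" for a
    using simple[of a] assms(1) that by (simp add: order_divides order_root)
  then have "size (proots p) = card (set_mset (proots p))"
    by (simp add: size_multiset_overloaded_eq)
  then show ?thesis
    using assms(1) by (simp add: size_proots_alg_closed)
qed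

lemma card_power_fixed_alg_closed:
  assumes "Q \<ge> 2" "of_nat Q = (0 :: 'r::alg_closed_field)"
  shows "card (power_fixed Q :: 'r set) = Q"
proof -
  define P :: "'r poly" where "P = monom 1 Q - [:0, 1:]"
  have deg: "degree P = Q"
    using assms(1) unfolding P_def diff_conv_add_uminus
    by (subst degree_add_eq_left) (auto simp: degree_monom_eq)
  then have "P \<noteq> 0"
    using assms(1) by auto
  have "pderiv P = [:-1:]"
    using assms(2) by (simp add: P_def pderiv_diff pderiv_monom pderiv_pCons)
  then have "\<not> [:-a, 1:] ^ 2 dvd P" for a
    using dvd_pderiv_if_square_dvd[of "[:-a, 1:]" P] dvd_imp_degree_le[of "[:-a, 1:]" "[:-1:]"] by auto
  then have "card {x. poly P x = 0} = Q"
    using card_roots_alg_closed[OF \<open>P \<noteq> 0\<close>] deg by simp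
  then show ?thesis
    by (simp add: power_fixed_def P_def poly_monom)
qed

lemma card_power_fixed_card_power:
  assumes "m \<ge> 1"
  shows "card (power_fixed (CARD('a) ^ m) :: 'a::{finite,field} alg_closure set) = CARD('a) ^ m"
proof (rule card_power_fixed_alg_closed)
  show "CARD('a) ^ m \<ge> 2"
    using assms finite_field_card_ge_2[where 'a = 'a] power_increasing[of 1 m "CARD('a)"] by simp
  show "of_nat (CARD('a) ^ m) = (0 :: 'a alg_closure)"
    using assms by (simp add: power_0_left)
qed

lemma elementary_abelian_power_fixed:
  assumes "m \<ge> 1"
  shows "elementary_abelian_subgroup CHAR('a) (power_fixed (CARD('a) ^ m) :: 'a::{finite,field} alg_closure set)"
proof -
  obtain k where "CARD('a) = CHAR('a) ^ k"
    using finite_field_card_CHAR_power by blast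
  then have Q: "CARD('a) ^ m = CHAR('a alg_closure) ^ (k * m)"
    by (simp add: power_mult)
  have prime: "Factorial_Ring.prime CHAR('a alg_closure)"
    using prime_CHAR_finite_field[where 'a = 'a] by simp
  have "elementary_abelian_subgroup CHAR('a alg_closure) (power_fixed (CARD('a) ^ m) :: 'a alg_closure set)"
  proof (rule elementary_abelian_subgroup_CHAR[OF prime])
    show "0 \<in> power_fixed (CARD('a) ^ m)"
      using finite_field_card_ge_2[where 'a = 'a] by (intro power_fixed_0) simp
  qed (rule power_fixed_add[OF prime Q])
  then show ?thesis
    by simp
qed

section \<open>Coordinates and projective space\<close>

abbreviation ac_scale :: "'a::field \<Rightarrow> 'a alg_closure \<Rightarrow> 'a alg_closure" where
  "ac_scale c x \<equiv> to_ac c * x"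

lemma lincomb_ac_scale_linear:
  "lincomb ac_scale bs (\<lambda>i. a * u i + b * w i) = to_ac a * lincomb ac_scale bs u + to_ac b * lincomb ac_scale bs w"
  by (simp add: lincomb_def sum.distrib sum_distrib_left algebra_simps)

lemma exists_ac_scale_basis:
  fixes S :: "'a::{finite,field} alg_closure set"
  assumes "finite S" "0 \<in> S" "\<And>x y. x \<in> S \<Longrightarrow> y \<in> S \<Longrightarrow> x + y \<in> S"
    and "\<And>c x. x \<in> S \<Longrightarrow> to_ac c * x \<in> S"
  shows "\<exists>bs. set bs \<subseteq> S \<and> bij_betw (lincomb ac_scale bs) (coord_space UNIV (length bs)) S"
proof (rule exists_lincomb_basis)
  show "card (UNIV :: 'a set) \<ge> 2"
    by (rule finite_field_card_ge_2)
  show "lincomb ac_scale bs c \<in> S" if "set bs \<subseteq> S" for bs and c :: "nat \<Rightarrow> 'a"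
    unfolding lincomb_def using that by (intro sum_mem_add_closed assms(2-4)) (auto dest: nth_mem)
  fix bs x c d
  assume neq: "c (length bs) \<noteq> d (length bs)"
    and eq: "lincomb ac_scale (bs @ [x]) c = lincomb ac_scale (bs @ [x]) d"
  define e where "e = c (length bs) - d (length bs)"
  have "e \<noteq> 0"
    using neq by (simp add: e_def)
  have ex: "to_ac e * x = lincomb ac_scale bs d - lincomb ac_scale bs c"
    using eq by (simp add: lincomb_snoc e_def algebra_simps)
  have "x = to_ac (1 / e) * (to_ac e * x)"
    using \<open>e \<noteq> 0\<close> by (simp add: mult.assoc[symmetric] flip: to_ac_mult)
  also have "\<dots> = to_ac (1 / e) * lincomb ac_scale bs d + to_ac (- (1 / e)) * lincomb ac_scale bs c"
    by (simp add: ex right_diff_distrib)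
  also have "\<dots> = lincomb ac_scale bs (\<lambda>i. 1 / e * d i + - (1 / e) * c i)"
    by (rule lincomb_ac_scale_linear[symmetric])
  also have "\<dots> = lincomb ac_scale bs (\<lambda>i. if i < length bs then 1 / e * d i + - (1 / e) * c i else 0)"
    by (rule lincomb_cong) simp
  finally show "x \<in> lincomb ac_scale bs ` coord_space UNIV (length bs)"
    by (auto simp: coord_space_def)
qed (use assms(1) in simp_all)

definition ac_linear :: "((nat \<Rightarrow> 'a::field) \<Rightarrow> 'a alg_closure) \<Rightarrow> bool" where
  "ac_linear L \<longleftrightarrow> (\<forall>u w c. L (\<lambda>i. u i + c * w i) = L u + to_ac c * L w)"

lemma ac_linearD: "ac_linear L \<Longrightarrow> L (\<lambda>i. u i + c * w i) = L u + to_ac c * L w"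
  by (simp add: ac_linear_def)

lemma ac_linear_zero:
  assumes "ac_linear L"
  shows "L (\<lambda>i. 0) = 0"
  using ac_linearD[OF assms, of "\<lambda>i. 0" "- 1" "\<lambda>i. 0"] by simp

lemma ac_linear_scale:
  assumes "ac_linear L"
  shows "L (\<lambda>i. c * v i) = to_ac c * L v"
  using ac_linearD[OF assms, of "\<lambda>i. 0" c v] by (simp add: ac_linear_zero[OF assms])

lemma pg_vecs_eq_coord_space: "pg_vecs n = coord_space UNIV (Suc n)"
  by (auto simp: pg_vecs_def coord_space_def Suc_le_eq)

lemma finite_pg_vecs: "finite (pg_vecs n :: (nat \<Rightarrow> 'a::{finite,field}) set)"
proof -
  have "card (pg_vecs n :: (nat \<Rightarrow> 'a) set) > 0"
    using finite_field_card_ge_2[where 'a = 'a] by (simp add: pg_vecs_eq_coord_space card_coord_space)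
  then show ?thesis
    using card_ge_0_finite by blast
qed

lemma exists_ac_linear_bij_pg_vecs:
  fixes K :: "'a::{finite,field} alg_closure set"
  assumes "finite K" "0 \<in> K" "\<And>x y. x \<in> K \<Longrightarrow> y \<in> K \<Longrightarrow> x + y \<in> K"
    and "\<And>c x. x \<in> K \<Longrightarrow> to_ac c * x \<in> K" and "card K = CARD('a) ^ Suc n"
  obtains L where "ac_linear L" "bij_betw L (pg_vecs n) K"
proof -
  obtain bs where bs: "bij_betw (lincomb ac_scale bs) (coord_space UNIV (length bs)) K"
    using exists_ac_scale_basis[OF assms(1-4)] by blast
  have "CARD('a) ^ length bs = CARD('a) ^ Suc n"
    using bij_betw_same_card[OF bs] assms(5) by (simp add: card_coord_space)
  then have "length bs = Suc n"
    using finite_field_card_ge_2[where 'a = 'a] by (simp del: power_Suc)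
  moreover have "ac_linear (lincomb ac_scale bs)"
    using lincomb_ac_scale_linear[of bs 1] by (simp add: ac_linear_def)
  ultimately show ?thesis
    using that bs by (simp add: pg_vecs_eq_coord_space)
qed

lemma span1_eq_image: "span1 v = (\<lambda>c i. c * v i) ` UNIV"
  by (auto simp: span1_def)

lemma span1_self: "v \<in> span1 v"
  unfolding span1_def by (auto intro: exI[of _ 1])

lemma inj_scale_nonzero:
  assumes "v \<noteq> (\<lambda>i. 0 :: 'a::field)"
  shows "inj (\<lambda>c i. c * v i)"
proof (rule injI)
  fix c d :: 'a
  assume eq: "(\<lambda>i. c * v i) = (\<lambda>i. d * v i)"
  obtain i where "v i \<noteq> 0"
    using assms by auto
  then show "c = d"
    using fun_cong[OF eq, of i] by simp
qed

lemma span1_scale: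
  assumes "(c :: 'a::field) \<noteq> 0"
  shows "span1 (\<lambda>i. c * v i) = span1 v"
proof -
  have "(\<lambda>d i. d * (c * v i)) ` UNIV = (\<lambda>d i. d * v i) ` ((\<lambda>d. d * c) ` UNIV)"
    by (simp add: image_image mult.assoc)
  also have "(\<lambda>d. d * c) ` UNIV = UNIV"
    using assms by (intro surjI[where f = "\<lambda>d. d / c"]) simp
  finally show ?thesis
    by (simp add: span1_eq_image)
qed

lemma pg_point_subset: "P \<in> pg_points n \<Longrightarrow> P \<subseteq> pg_vecs n"
  by (auto simp: pg_points_def span1_def pg_vecs_def)

lemma pg_point_eq_span1:
  assumes "P \<in> pg_points n" "w \<in> P" "w \<noteq> (\<lambda>i. 0)"
  shows "P = span1 w"
proof -
  obtain v c where "P = span1 v" "w = (\<lambda>i. c * v i)"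
    using assms(1,2) by (auto simp: pg_points_def span1_def)
  moreover have "c \<noteq> 0"
    using assms(3) calculation(2) by auto
  ultimately show ?thesis
    by (simp add: span1_scale)
qed

section \<open>Power sums over points and hyperplanes\<close>

lemma sum_span1_power_card_minus_1:
  fixes v :: "nat \<Rightarrow> 'a::{finite,field}"
  assumes "ac_linear L" "v \<noteq> (\<lambda>i. 0)"
  shows "(\<Sum>w\<in>span1 v. L w ^ (CARD('a) - 1)) = - (L v ^ (CARD('a) - 1))"
proof -
  have "(\<Sum>w\<in>span1 v. L w ^ (CARD('a) - 1)) = (\<Sum>c\<in>UNIV. L (\<lambda>i. c * v i) ^ (CARD('a) - 1))"
    unfolding span1_eq_image using inj_scale_nonzero[OF assms(2)] by (simp add: sum.reindex)
  also have "\<dots> = (\<Sum>c::'a\<in>UNIV. (0 + to_ac c * L v) ^ (CARD('a) - 1))"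
    by (simp add: ac_linear_scale[OF assms(1)])
  also have "\<dots> = - (L v ^ (CARD('a) - 1))"
    by (rule sum_line_power_card_minus_1)
  finally show ?thesis .
qed

lemma sum_split_coordinate:
  fixes V :: "(nat \<Rightarrow> 'a::field) set" and H :: "(nat \<Rightarrow> 'a) \<Rightarrow> 'b::comm_monoid_add"
  assumes "w k = 1" and closed: "\<And>v c. v \<in> V \<Longrightarrow> (\<lambda>i. v i + c * w i) \<in> V"
  shows "(\<Sum>v\<in>V. H v) = (\<Sum>u\<in>{v\<in>V. v k = 0}. \<Sum>c\<in>UNIV. H (\<lambda>i. u i + c * w i))"
proof -
  have "(\<Sum>v\<in>V. H v) = (\<Sum>(u, c)\<in>{v\<in>V. v k = 0} \<times> UNIV. H (\<lambda>i. u i + c * w i))"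
  proof (rule sum.reindex_bij_witness[where i = "\<lambda>(u, c) i. u i + c * w i"
        and j = "\<lambda>v. (\<lambda>i. v i - v k * w i, v k)"])
    fix v assume "v \<in> V"
    then show "(\<lambda>i. v i - v k * w i, v k) \<in> {v \<in> V. v k = 0} \<times> UNIV"
      using closed[of v "- v k"] assms(1) by simp
  qed (use assms closed in auto)
  then show ?thesis
    by (simp add: sum.cartesian_product)
qed

lemma sum_subspace_power_card_minus_1:
  fixes W :: "(nat \<Rightarrow> 'a::{finite,field}) set"
  assumes "finite W" and closed: "\<And>v u c. v \<in> W \<Longrightarrow> u \<in> W \<Longrightarrow> (\<lambda>i. v i + c * u i) \<in> W"
    and "ac_linear L" and w: "w1 \<in> W" "w2 \<in> W" "w1 k = 1" "w2 k = 0" "w2 l = 1"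
  shows "(\<Sum>v\<in>W. L v ^ (CARD('a) - 1)) = 0"
proof -
  define U where "U = {v\<in>W. v k = 0}"
  have "card U = (\<Sum>u\<in>U. 1)"
    by simp
  also have "\<dots> = (\<Sum>u\<in>{v\<in>U. v l = 0}. \<Sum>c\<in>(UNIV :: 'a set). 1)"
    by (rule sum_split_coordinate[where w = w2]) (use closed w in \<open>auto simp: U_def\<close>)
  finally have "card U = card {v\<in>U. v l = 0} * CARD('a)"
    by simp
  then have "of_nat (card U) = (0 :: 'a alg_closure)"
    by simp
  have "(\<Sum>v\<in>W. L v ^ (CARD('a) - 1))
      = (\<Sum>u\<in>U. \<Sum>c\<in>UNIV. (L u + to_ac c * L w1) ^ (CARD('a) - 1))"
    unfolding U_def using closed w(1,3)
    by (subst sum_split_coordinate[where w = w1]) (simp_all add: ac_linearD[OF assms(3)])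
  also have "\<dots> = (\<Sum>u\<in>U. - (L w1 ^ (CARD('a) - 1)))"
    by (intro sum.cong refl sum_line_power_card_minus_1)
  also have "\<dots> = - (of_nat (card U) * L w1 ^ (CARD('a) - 1))"
    by (simp add: sum_negf)
  finally show ?thesis
    using \<open>of_nat (card U) = 0\<close> by simp
qed

lemma sum_hyperplane_vecs_power_card_minus_1:
  fixes a :: "nat \<Rightarrow> 'a::{finite,field}"
  assumes "n \<ge> 2" "a \<in> pg_vecs n" "a \<noteq> (\<lambda>i. 0)" "ac_linear L"
  shows "(\<Sum>v\<in>{v\<in>pg_vecs n. (\<Sum>i\<le>n. a i * v i) = 0}. L v ^ (CARD('a) - 1)) = 0"
proof -
  define W where "W = {v\<in>pg_vecs n. (\<Sum>i\<le>n. a i * v i) = 0}"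
  obtain j where j: "a j \<noteq> 0"
    using assms(3) by auto
  then have "j \<le> n"
    using assms(2) by (auto simp: pg_vecs_def not_le[symmetric])
  define k where "k = (if j = 0 then 1 else (0::nat))"
  define l where "l = (if j = 2 then 1 else (2::nat))"
  have kl: "k \<noteq> j" "l \<noteq> j" "k \<noteq> l" "k \<le> n" "l \<le> n"
    using assms(1) by (auto simp: k_def l_def)
  define e where "e t = (\<lambda>i. if i = t then 1 else if i = j then - a t / a j else 0)" for t
  have e: "e t \<in> W" if "t \<le> n" "t \<noteq> j" for t
  proof -
    have "(\<Sum>i\<le>n. a i * e t i) = (\<Sum>i\<le>n. (if i = t then a t else 0) + (if i = j then - a t else 0))"
      using j that by (intro sum.cong) (auto simp: e_def)
    also have "\<dots> = 0"
      using that \<open>j \<le> n\<close> by (simp add: sum.distrib)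
    finally show ?thesis
      using that \<open>j \<le> n\<close> by (auto simp: W_def pg_vecs_def e_def)
  qed
  have "(\<Sum>v\<in>W. L v ^ (CARD('a) - 1)) = 0"
  proof (rule sum_subspace_power_card_minus_1[where k = k and l = l, OF _ _ assms(4) e[of k] e[of l]])
    show "finite W"
      unfolding W_def by (rule finite_subset[OF _ finite_pg_vecs]) auto
    show "(\<lambda>i. v i + c * u i) \<in> W" if "v \<in> W" "u \<in> W" for v u c
      using that by (auto simp: W_def pg_vecs_def algebra_simps sum.distrib simp flip: sum_distrib_left)
  qed (use kl in \<open>simp_all add: e_def\<close>)
  then show ?thesis
    by (simp add: W_def)
qed

lemma pg_hyperplane_vecs:
  "insert (\<lambda>i. 0) (\<Union>(pg_hyperplane n a)) = {v \<in> pg_vecs n. (\<Sum>i\<le>n. a i * v i) = (0 :: 'a::field)}"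
proof (intro equalityI subsetI)
  fix w assume "w \<in> insert (\<lambda>i. 0) (\<Union>(pg_hyperplane n a))"
  then show "w \<in> {v \<in> pg_vecs n. (\<Sum>i\<le>n. a i * v i) = 0}"
    using pg_point_subset by (auto simp: pg_hyperplane_def pg_vecs_def)
next
  fix w assume w: "w \<in> {v \<in> pg_vecs n. (\<Sum>i\<le>n. a i * v i) = 0}"
  show "w \<in> insert (\<lambda>i. 0) (\<Union>(pg_hyperplane n a))"
  proof (cases "w = (\<lambda>i. 0)")
    case False
    have "\<forall>u\<in>span1 w. (\<Sum>i\<le>n. a i * u i) = 0"
      using w by (auto simp: span1_def mult.left_commute simp flip: sum_distrib_left)
    then have "span1 w \<in> pg_hyperplane n a"
      using w False by (auto simp: pg_hyperplane_def pg_points_def)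
    then show ?thesis
      using span1_self[of w] by blast
  qed simp
qed

lemma inj_on_pg_points_power_sum:
  fixes L :: "(nat \<Rightarrow> 'a::{finite,field}) \<Rightarrow> 'a alg_closure"
  assumes "ac_linear L" "inj_on L (pg_vecs n)"
  shows "inj_on (\<lambda>P. \<Sum>v\<in>P. L v ^ (CARD('a) - 1)) (pg_points n)"
proof (rule inj_onI)
  fix P P'
  assume "P \<in> pg_points n" "P' \<in> pg_points n"
    and eq: "(\<Sum>v\<in>P. L v ^ (CARD('a) - 1)) = (\<Sum>v\<in>P'. L v ^ (CARD('a) - 1))"
  then obtain v v' where v: "v \<in> pg_vecs n" "v \<noteq> (\<lambda>i. 0)" "P = span1 v"
    and v': "v' \<in> pg_vecs n" "v' \<noteq> (\<lambda>i. 0)" "P' = span1 v'"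
    by (auto simp: pg_points_def)
  have zero: "(\<lambda>i. 0) \<in> pg_vecs n"
    by (simp add: pg_vecs_def)
  have nonzero: "L w \<noteq> 0" if "w \<in> pg_vecs n" "w \<noteq> (\<lambda>i. 0)" for w
    using inj_onD[OF assms(2) _ that(1) zero] that(2) ac_linear_zero[OF assms(1)] by auto
  have "L v ^ (CARD('a) - 1) = L v' ^ (CARD('a) - 1)"
    using eq v(3) v'(3) sum_span1_power_card_minus_1[OF assms(1) v(2)]
      sum_span1_power_card_minus_1[OF assms(1) v'(2)] by simp
  then have "(L v' / L v) ^ (CARD('a) - 1) = 1"
    using nonzero[OF v(1,2)] nonzero[OF v'(1,2)] by (simp add: power_divide)
  then obtain c where c: "c \<noteq> 0" "L v' / L v = to_ac c"
    using alg_closure_root_of_unity_in_base by blast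
  then have "L v' = L (\<lambda>i. c * v i)"
    using nonzero[OF v(1,2)] by (simp add: ac_linear_scale[OF assms(1)] field_simps)
  then have "v' = (\<lambda>i. c * v i)"
    using inj_onD[OF assms(2)] v(1) v'(1) by (auto simp: pg_vecs_def)
  then show "P = P'"
    using v(3) v'(3) span1_scale[OF c(1)] by simp
qed

lemma sum_pg_hyperplane_power_sum:
  fixes L :: "(nat \<Rightarrow> 'a::{finite,field}) \<Rightarrow> 'a alg_closure"
  assumes "n \<ge> 2" "ac_linear L" "B \<in> pg_hyperplanes n"
  shows "(\<Sum>P\<in>B. \<Sum>v\<in>P. L v ^ (CARD('a) - 1)) = 0"
proof -
  obtain a where a: "a \<in> pg_vecs n" "a \<noteq> (\<lambda>i. 0)" and B: "B = pg_hyperplane n a"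
    using assms(3) by (auto simp: pg_hyperplanes_def)
  have B_points: "B \<subseteq> pg_points n"
    by (auto simp: B pg_hyperplane_def)
  have ge2: "CARD('a) \<ge> 2"
    by (rule finite_field_card_ge_2)
  then have zero: "L (\<lambda>i. 0) ^ (CARD('a) - 1) = 0"
    by (simp add: ac_linear_zero[OF assms(2)] power_0_left)
  have "\<forall>P\<in>B. finite P"
    using B_points by (auto intro: finite_subset[OF pg_point_subset finite_pg_vecs])
  moreover have "L x ^ (CARD('a) - 1) = 0" if "P1 \<in> B" "P2 \<in> B" "P1 \<noteq> P2" "x \<in> P1" "x \<in> P2" for P1 P2 x
  proof -
    have "x = (\<lambda>i. 0)"
      using that B_points pg_point_eq_span1 by blast
    then show ?thesis
      using zero by simp
  qed
  ultimately have "(\<Sum>P\<in>B. \<Sum>v\<in>P. L v ^ (CARD('a) - 1)) = (\<Sum>v\<in>\<Union>B. L v ^ (CARD('a) - 1))"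
    using sum.Union_comp[of B "\<lambda>v. L v ^ (CARD('a) - 1)"] by simp
  also have "\<dots> = (\<Sum>v\<in>insert (\<lambda>i. 0) (\<Union>B). L v ^ (CARD('a) - 1))"
  proof -
    have "finite (\<Union>B)"
      using B_points pg_point_subset by (intro finite_subset[OF _ finite_pg_vecs[of n]]) blast
    then show ?thesis
      using ge2 by (simp add: sum.insert_if ac_linear_zero[OF assms(2)] power_0_left)
  qed
  also have "\<dots> = 0"
    unfolding B pg_hyperplane_vecs by (rule sum_hyperplane_vecs_power_card_minus_1[OF assms(1) a assms(2)])
  finally show ?thesis .
qed

lemma additive_under_pg_design:
  fixes L :: "(nat \<Rightarrow> 'a::{finite,field}) \<Rightarrow> 'a alg_closure" and \<psi> :: "'a alg_closure \<Rightarrow> 'g::ab_group_add"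
  assumes "n \<ge> 2" "ac_linear L" "bij_betw L (pg_vecs n) K"
    and K: "0 \<in> K" "\<And>x y. x \<in> K \<Longrightarrow> y \<in> K \<Longrightarrow> x + y \<in> K" "\<And>x k. x \<in> K \<Longrightarrow> x ^ k \<in> K"
    and \<psi>: "inj_on \<psi> K" "\<And>x y. x \<in> K \<Longrightarrow> y \<in> K \<Longrightarrow> \<psi> (x + y) = \<psi> x + \<psi> y"
  shows "additive_under (pg_points n :: (nat \<Rightarrow> 'a) set set) (pg_hyperplanes n) TYPE('g)"
proof (rule additive_underI[OF inj_on_pg_points_power_sum[OF assms(2)] _ _ _ K(1,2) \<psi>])
  show "inj_on L (pg_vecs n)"
    using assms(3) by (simp add: bij_betw_def)
  have "(\<Sum>v\<in>P. L v ^ (CARD('a) - 1)) \<in> K" if "P \<in> pg_points n" for P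
    using assms(3) pg_point_subset[OF that] by (intro sum_mem_add_closed K) (auto simp: bij_betw_def)
  then show "(\<lambda>P. \<Sum>v\<in>P. L v ^ (CARD('a) - 1)) ` pg_points n \<subseteq> K"
    by blast
  show "B \<subseteq> pg_points n" if "B \<in> pg_hyperplanes n" for B
    using that by (auto simp: pg_hyperplanes_def pg_hyperplane_def)
  show "(\<Sum>P\<in>B. \<Sum>v\<in>P. L v ^ (CARD('a) - 1)) = 0" if "B \<in> pg_hyperplanes n" for B
    using sum_pg_hyperplane_power_sum[OF assms(1,2) that] .
qed

theorem corollary3p2:
  fixes n :: nat
  assumes "n \<ge> 2"
    and "card (UNIV :: 'g::{finite,ab_group_add} set) = card (UNIV :: 'a::{finite,field} set) ^ (n + 1)"
    and "elementary_abelian TYPE('g)"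
  shows "additive_under (pg_points n :: (nat \<Rightarrow> 'a) set set) (pg_hyperplanes n) TYPE('g)"
proof -
  obtain p where G: "elementary_abelian_subgroup p (UNIV :: 'g set)"
    using assms(3) by (auto simp: elementary_abelian_def elementary_abelian_subgroup_def nat_scale_def)
  define K where "K = (power_fixed (CARD('a) ^ Suc n) :: 'a alg_closure set)"
  have card_K: "card K = CARD('g)" and K: "elementary_abelian_subgroup CHAR('a) K"
    using assms(2) card_power_fixed_card_power[of "Suc n"] elementary_abelian_power_fixed[of "Suc n"]
    by (simp_all add: K_def)
  have "card K > 1"
    using assms(2) card_K one_less_power[of "CARD('a)" "n + 1"] finite_field_card_ge_2[where 'a = 'a] by simp
  then have "finite K"
    by (intro card_ge_0_finite) simp
  have "CHAR('a) = p"
    using elementary_abelian_same_prime[OF K \<open>finite K\<close> G] card_K \<open>card K > 1\<close> by simp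
  obtain \<psi> :: "'a alg_closure \<Rightarrow> 'g" where \<psi>: "bij_betw \<psi> K UNIV" "\<forall>x\<in>K. \<forall>y\<in>K. \<psi> (x + y) = \<psi> x + \<psi> y"
    using elementary_abelian_iso[OF K \<open>finite K\<close> G[folded \<open>CHAR('a) = p\<close>] finite_class.finite_UNIV] card_K
    by auto
  have K_group: "0 \<in> K" "\<And>x y. x \<in> K \<Longrightarrow> y \<in> K \<Longrightarrow> x + y \<in> K"
    using K by (simp_all add: elementary_abelian_subgroup_def)
  obtain L where L: "ac_linear L" "bij_betw L (pg_vecs n) K"
    using exists_ac_linear_bij_pg_vecs[OF \<open>finite K\<close> K_group] card_K assms(2)
    by (metis K_def power_fixed_mult to_ac_in_power_fixed Suc_eq_plus1)
  show ?thesis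
    using additive_under_pg_design[OF assms(1) L K_group _ _ \<psi>(2)[rule_format]] \<psi>(1)
    by (simp add: K_def power_fixed_power bij_betw_def)
qed

end
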